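(* Fix a dimension $D\geqslant 2$. For every integer $n$ and every integer $k$ with $0<k<n$, $$\delta(n,k) \geqslant \frac{2}{\pi}\Big\lfloor \frac{n}{k+1}\Big\rfloor - 1.$$
   Context: For a graph $G$ whose vertices are points in $\mathbb{R}^D$, each edge $(u,v)$ has weight equal to the Euclidean distance $d(u,v)$ (edges may cross or overlap), and $d_G(u,v)$ is the length of a shortest path in $G$ between $u$ and $v$. The dilation of $G$ is $\Delta(G)=\max_{u\neq v\in V(G)} d_G(u,v)/d(u,v)$ (infinite if $G$ is disconnected). For a finite set $S$ of $n$ points and an integer $k\ge0$, $\Delta(S,k)$ is the minimum of $\Delta(G)$ over all graphs $G$ with vertex set exactly $S$ and exactly $n-1+k$ edges. $\delta(n,k)=\sup\{\Delta(S,k): S\subset\mathbb{R}^D,\ |S|=n\}$. *)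

theory Defs
  imports "HOL-Analysis.Analysis"
begin

definition geo_graph :: "'a set \<Rightarrow> 'a set set \<Rightarrow> bool" where
  "geo_graph S E \<longleftrightarrow> (\<forall>e\<in>E. e \<subseteq> S \<and> card e = 2)"

definition is_walk :: "'a set set \<Rightarrow> 'a \<Rightarrow> 'a \<Rightarrow> 'a list \<Rightarrow> bool" where
  "is_walk E u v ps \<longleftrightarrow> ps \<noteq> [] \<and> hd ps = u \<and> last ps = v \<and>
     (\<forall>i. Suc i < length ps \<longrightarrow> {ps ! i, ps ! Suc i} \<in> E)"

definition walk_length :: "'a::metric_space list \<Rightarrow> real" where
  "walk_length ps = (\<Sum>i<length ps - 1. dist (ps ! i) (ps ! Suc i))"

text \<open>Shortest-path distance (infinite if no path exists).\<close>
definition graph_dist :: "'a set set \<Rightarrow> 'a::metric_space \<Rightarrow> 'a \<Rightarrow> ereal" where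
  "graph_dist E u v = (INF ps \<in> {ps. is_walk E u v ps}. ereal (walk_length ps))"

definition dilation :: "'a::metric_space set \<Rightarrow> 'a set set \<Rightarrow> ereal" where
  "dilation S E = (SUP p \<in> {(u, v). u \<in> S \<and> v \<in> S \<and> u \<noteq> v}.
      graph_dist E (fst p) (snd p) / ereal (dist (fst p) (snd p)))"

definition min_dilation :: "'a::metric_space set \<Rightarrow> nat \<Rightarrow> ereal" where
  "min_dilation S k = (INF E \<in> {E. geo_graph S E \<and> card E = card S - 1 + k}. dilation S E)"

definition delta :: "'a::metric_space itself \<Rightarrow> nat \<Rightarrow> nat \<Rightarrow> ereal" where
  "delta _ n k = (SUP S \<in> {S :: 'a set. finite S \<and> card S = n}. min_dilation S k)"

end

theory Submission
  imports Defs
begin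

text \<open>Place \<open>k + 1\<close> regular polygons with at least \<open>m = \<lfloor>n / (k + 1)\<rfloor>\<close> vertices on unit
  circles far apart in a plane. A connected graph with \<open>n - 1 + k\<close> edges contains a spanning
  tree \<open>T\<close>, and its \<open>k\<close> further edges miss one polygon, so all edges inside that polygon lie
  in \<open>T\<close>. Measure each step between two of its vertices by the shortest signed displacement
  around the cycle. On a forest this is a potential difference, so the winding of any walk
  inside the polygon from vertex \<open>i\<close> to vertex \<open>i + 1\<close> is \<open>h (i + 1) - h i\<close>; these increments
  sum to \<open>0\<close> around the polygon, hence some \<open>i\<close> admits no walk of winding \<open>1\<close>. A winding
  congruent to \<open>1\<close> modulo \<open>M\<close> but different from \<open>1\<close> has absolute value at least \<open>M - 1\<close>,
  and by Jordan's inequality a chord spanning \<open>s\<close> steps has length at least \<open>4 s / M\<close>. So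
  every walk from vertex \<open>i\<close> to vertex \<open>i + 1\<close> has length at least \<open>4 (M - 1) / M\<close>, while
  their distance is at most \<open>2 \<pi> / M\<close>, giving dilation at least \<open>2 (m - 1) / \<pi>\<close>.\<close>

lemma Jordan_inequality:
  fixes x :: real
  assumes "0 \<le> x" "x \<le> pi / 2"
  shows "2 / pi * x \<le> sin x"
proof -
  have "convex_on {0..pi/2} (\<lambda>x. - sin x)"
    by (rule f''_ge0_imp_convex[where f'="\<lambda>x. - cos x" and f''="\<lambda>x. sin x"])
       (auto intro!: derivative_eq_intros sin_ge_zero)
  moreover define t where "t = 2 / pi * x"
  moreover have "0 \<le> t" "t \<le> 1"
    using assms pi_gt_zero by (auto simp: t_def field_simps)
  ultimately have "- sin ((1 - t) *\<^sub>R 0 + t *\<^sub>R (pi/2)) \<le> (1 - t) * (- sin 0) + t * (- sin (pi/2))"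
    by (intro convex_onD) auto
  then show ?thesis by (simp add: t_def)
qed

lemma norm_cis_diff: "norm (cis A - cis B) = 2 * \<bar>sin ((A - B) / 2)\<bar>"
proof -
  have "cis A - cis B = cis ((A + B) / 2) * (cis ((A - B) / 2) - cis (- ((A - B) / 2)))"
  proof -
    have half_angles: "(A + B) / 2 - (A - B) / 2 = B" "(A - B) / 2 + (A + B) / 2 = A"
      by (simp_all add: field_simps)
    show ?thesis by (simp add: algebra_simps cis_mult half_angles)
  qed
  also have "cis ((A - B) / 2) - cis (- ((A - B) / 2)) = Complex 0 (2 * sin ((A - B) / 2))"
    by (simp add: cis.ctr complex_eq_iff)
  finally show ?thesis
    by (simp add: norm_mult complex_norm real_sqrt_mult)
qed

definition polygon_vertex :: "nat \<Rightarrow> nat \<Rightarrow> complex" where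
  "polygon_vertex M a = cis (2 * pi * real a / real M)"

lemma norm_polygon_vertex_diff:
  "norm (polygon_vertex M a - polygon_vertex M b) = 2 * \<bar>sin (pi * (real a - real b) / real M)\<bar>"
  unfolding polygon_vertex_def norm_cis_diff by (simp add: diff_divide_distrib algebra_simps)

lemma polygon_vertex_mod: "polygon_vertex M (a mod M) = polygon_vertex M a"
proof (cases "M = 0")
  case False
  have "real a = real (a mod M) + real M * real (a div M)"
    by (metis mod_mult_div_eq of_nat_add of_nat_mult)
  then have "2 * pi * real a / real M = 2 * pi * real (a mod M) / real M + 2 * pi * real (a div M)"
    using False by (simp add: field_simps)
  then show ?thesis
    unfolding polygon_vertex_def by (simp add: cis_mult[symmetric])
qed simp

lemma abs_sin_add_int_pi: "\<bar>sin (x + pi * of_int q)\<bar> = \<bar>sin x\<bar>"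
  by (simp add: sin_add abs_mult)

definition centered_residue :: "nat \<Rightarrow> int \<Rightarrow> int" where
  "centered_residue M d = (let r = d mod int M in if 2 * r \<le> int M then r else r - int M)"

lemma centered_residue_cong: "int M dvd centered_residue M d - d"
proof -
  have "int M dvd d mod int M - d"
    by (simp flip: mod_eq_dvd_iff)
  moreover from this have "int M dvd (d mod int M - d) - int M"
    by (rule dvd_diff) simp
  ultimately show ?thesis
    unfolding centered_residue_def Let_def by (auto simp: algebra_simps)
qed

lemma abs_centered_residue_le:
  assumes "0 < M"
  shows "2 * \<bar>centered_residue M d\<bar> \<le> int M"
proof -
  have "0 \<le> d mod int M" "d mod int M < int M"
    using assms by simp_all
  then show ?thesis
    unfolding centered_residue_def Let_def by (auto simp: abs_if)
qed

text \<open>When \<open>a\<close> and \<open>b\<close> are antipodal both directions are shortest; the choice made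
  through the comparison \<open>a \<le> b\<close> keeps \<open>cyclic_disp\<close> antisymmetric.\<close>
definition cyclic_disp :: "nat \<Rightarrow> nat \<Rightarrow> nat \<Rightarrow> int" where
  "cyclic_disp M a b =
     (if a \<le> b then centered_residue M (int b - int a) else - centered_residue M (int a - int b))"

lemma cyclic_disp_antisym: "cyclic_disp M b a = - cyclic_disp M a b"
  by (cases a b rule: linorder_cases) (simp_all add: cyclic_disp_def centered_residue_def)

lemma cyclic_disp_cong: "int M dvd cyclic_disp M a b - (int b - int a)"
proof (cases "a \<le> b")
  case False
  then have "cyclic_disp M a b - (int b - int a) = - (centered_residue M (int a - int b) - (int a - int b))"
    by (simp add: cyclic_disp_def)
  then show ?thesis
    using centered_residue_cong[of M "int a - int b"] by (simp only: dvd_minus_iff)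
qed (simp add: cyclic_disp_def centered_residue_cong)

lemma abs_cyclic_disp_le: "0 < M \<Longrightarrow> 2 * \<bar>cyclic_disp M a b\<bar> \<le> int M"
  unfolding cyclic_disp_def using abs_centered_residue_le by auto

lemma cyclic_disp_nonzero:
  assumes "a < M" "b < M" "a \<noteq> b"
  shows "cyclic_disp M a b \<noteq> 0"
proof
  assume "cyclic_disp M a b = 0"
  then have "int M dvd int a - int b"
    using cyclic_disp_cong[of M a b] by simp
  then have "int M \<le> \<bar>int a - int b\<bar>"
    using dvd_imp_le_int[of "int a - int b" "int M"] assms(3) by simp
  then show False
    using assms(1,2) by linarith
qed

lemma norm_polygon_vertex_diff_cyclic_disp:
  assumes "0 < M"
  shows "norm (polygon_vertex M a - polygon_vertex M b)
    = 2 * \<bar>sin (pi * \<bar>real_of_int (cyclic_disp M a b)\<bar> / real M)\<bar>"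
proof -
  define s where "s = real_of_int (cyclic_disp M a b)"
  obtain q where "cyclic_disp M a b - (int b - int a) = int M * q"
    using cyclic_disp_cong[of M a b] by (elim dvdE)
  then have "real_of_int (cyclic_disp M a b - (int b - int a)) = real_of_int (int M * q)"
    by (rule arg_cong)
  then have "real a - real b = - s + real M * of_int q"
    unfolding s_def by (simp add: algebra_simps)
  then have "pi * (real a - real b) / real M = pi * (- s + real M * of_int q) / real M"
    by simp
  also have "\<dots> = - (pi * s / real M) + pi * of_int q"
    using assms by (simp add: field_simps)
  finally have "norm (polygon_vertex M a - polygon_vertex M b)
      = 2 * \<bar>sin (- (pi * s / real M) + pi * of_int q)\<bar>"
    by (simp only: norm_polygon_vertex_diff)
  also have "\<bar>sin (- (pi * s / real M) + pi * of_int q)\<bar> = \<bar>sin (pi * s / real M)\<bar>"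
    by (simp only: abs_sin_add_int_pi sin_minus abs_minus_cancel)
  also have "\<dots> = \<bar>sin (pi * \<bar>s\<bar> / real M)\<bar>"
  proof -
    have "\<bar>sin \<bar>y\<bar>\<bar> = \<bar>sin y\<bar>" for y :: real
      by (cases "0 \<le> y") simp_all
    from this[of "pi * s / real M"] show ?thesis
      by (simp add: abs_mult)
  qed
  finally show ?thesis
    unfolding s_def .
qed

lemma norm_polygon_vertex_diff_ge:
  assumes "0 < M"
  shows "4 * \<bar>real_of_int (cyclic_disp M a b)\<bar> / real M \<le> norm (polygon_vertex M a - polygon_vertex M b)"
proof -
  define x where "x = pi * \<bar>real_of_int (cyclic_disp M a b)\<bar> / real M"
  have "real_of_int (2 * \<bar>cyclic_disp M a b\<bar>) \<le> real_of_int (int M)"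
    using abs_cyclic_disp_le[OF assms] unfolding of_int_le_iff .
  then have "0 \<le> x" "x \<le> pi / 2"
    using assms by (simp_all add: x_def field_simps)
  then have "2 / pi * x \<le> sin x" "0 \<le> sin x"
    by (rule Jordan_inequality, intro sin_ge_zero) auto
  then show ?thesis
    unfolding norm_polygon_vertex_diff_cyclic_disp[OF assms] x_def[symmetric] by (simp add: x_def)
qed

lemma norm_polygon_vertex_Suc_le:
  "0 < M \<Longrightarrow> norm (polygon_vertex M a - polygon_vertex M (Suc a mod M)) \<le> 2 * pi / real M"
  using abs_sin_x_le_abs_x[of "pi / real M"]
  by (simp add: polygon_vertex_mod norm_polygon_vertex_diff)

lemma sum_steps_telescope:
  fixes g :: "'a \<Rightarrow> 'b::ab_group_add"
  assumes "xs \<noteq> []"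
    and "\<And>t. Suc t < length xs \<Longrightarrow> f (xs ! t) (xs ! Suc t) = g (xs ! Suc t) - g (xs ! t)"
  shows "(\<Sum>t<length xs - 1. f (xs ! t) (xs ! Suc t)) = g (last xs) - g (hd xs)"
proof -
  have "(\<Sum>t<length xs - 1. f (xs ! t) (xs ! Suc t)) = (\<Sum>t<length xs - 1. g (xs ! Suc t) - g (xs ! t))"
    using assms(2) by (intro sum.cong) auto
  also have "\<dots> = g (xs ! (length xs - 1)) - g (xs ! 0)"
    by (rule sum_lessThan_telescope)
  finally show ?thesis
    using assms(1) by (simp add: hd_conv_nth last_conv_nth)
qed

lemma cyclic_disp_sum_cong:
  assumes "xs \<noteq> []"
  shows "int M dvd (\<Sum>t<length xs - 1. cyclic_disp M (xs ! t) (xs ! Suc t)) - (int (last xs) - int (hd xs))"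
proof -
  have "(\<Sum>t<length xs - 1. int (xs ! Suc t) - int (xs ! t)) = int (last xs) - int (hd xs)"
    using assms by (rule sum_steps_telescope) simp
  then have "(\<Sum>t<length xs - 1. cyclic_disp M (xs ! t) (xs ! Suc t)) - (int (last xs) - int (hd xs))
      = (\<Sum>t<length xs - 1. cyclic_disp M (xs ! t) (xs ! Suc t) - (int (xs ! Suc t) - int (xs ! t)))"
    by (simp add: sum_subtractf)
  also have "int M dvd \<dots>"
    by (intro dvd_sum cyclic_disp_cong)
  finally show ?thesis .
qed

lemma abs_ge_if_dvd_diff_one:
  fixes D :: int
  assumes "int M dvd D - 1" "D \<noteq> 1"
  shows "int M - 1 \<le> \<bar>D\<bar>"
  using dvd_imp_le_int[of "D - 1" "int M"] assms by simp

lemma cyclic_increment_ne_one: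
  fixes g :: "nat \<Rightarrow> int"
  assumes "0 < M"
  shows "\<exists>i<M. g (Suc i mod M) - g i \<noteq> 1"
proof (rule ccontr)
  assume "\<not> ?thesis"
  then have "(\<Sum>i<M. g (Suc i mod M) - g i) = int M"
    by simp
  moreover obtain M' where M: "M = Suc M'"
    using assms gr0_implies_Suc by blast
  have "(\<Sum>i<M'. g (Suc i mod M) - g i) = (\<Sum>i<M'. g (Suc i) - g i)"
    unfolding M by (intro sum.cong) auto
  then have "(\<Sum>i<M. g (Suc i mod M) - g i) = 0"
    unfolding M by (simp add: sum_lessThan_telescope)
  ultimately show False
    using assms by simp
qed

lemma polygon_path_length_ge:
  assumes "2 \<le> M" "xs \<noteq> []" "last xs = Suc (hd xs) mod M"
    and winding: "(\<Sum>t<length xs - 1. cyclic_disp M (xs ! t) (xs ! Suc t)) \<noteq> 1"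
  shows "4 * (real M - 1) / real M
    \<le> (\<Sum>t<length xs - 1. norm (polygon_vertex M (xs ! t) - polygon_vertex M (xs ! Suc t)))"
proof -
  define D where "D = (\<Sum>t<length xs - 1. cyclic_disp M (xs ! t) (xs ! Suc t))"
  have "int M dvd D - (int (last xs) - int (hd xs))"
    unfolding D_def using assms(2) by (rule cyclic_disp_sum_cong)
  moreover have "int M dvd int (last xs) - int (Suc (hd xs))"
    unfolding assms(3) by (simp add: of_nat_mod flip: mod_eq_dvd_iff)
  moreover have "D - 1 = (D - (int (last xs) - int (hd xs))) + (int (last xs) - int (Suc (hd xs)))"
    by simp
  ultimately have "int M dvd D - 1"
    by (metis dvd_add)
  then have "int M - 1 \<le> \<bar>D\<bar>"
    using winding unfolding D_def[symmetric] by (rule abs_ge_if_dvd_diff_one)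
  then have "real M - 1 \<le> \<bar>real_of_int D\<bar>"
    by linarith
  also have "\<dots> \<le> (\<Sum>t<length xs - 1. \<bar>real_of_int (cyclic_disp M (xs ! t) (xs ! Suc t))\<bar>)"
    unfolding D_def of_int_sum by (rule sum_abs)
  finally have "4 / real M * (real M - 1)
      \<le> 4 / real M * (\<Sum>t<length xs - 1. \<bar>real_of_int (cyclic_disp M (xs ! t) (xs ! Suc t))\<bar>)"
    by (rule mult_left_mono) simp
  then have "4 * (real M - 1) / real M
      \<le> (\<Sum>t<length xs - 1. 4 * \<bar>real_of_int (cyclic_disp M (xs ! t) (xs ! Suc t))\<bar> / real M)"
    by (simp add: sum_distrib_left)
  also have "\<dots> \<le> (\<Sum>t<length xs - 1. norm (polygon_vertex M (xs ! t) - polygon_vertex M (xs ! Suc t)))"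
    using assms(1) by (intro sum_mono norm_polygon_vertex_diff_ge) simp
  finally show ?thesis .
qed

lemma walk_imp_rtranclp:
  assumes "is_walk E u v ps"
  shows "(\<lambda>x y. {x, y} \<in> E)\<^sup>*\<^sup>* u v"
proof -
  have "(\<lambda>x y. {x, y} \<in> E)\<^sup>*\<^sup>* (ps ! 0) (ps ! t)" if "t < length ps" for t
    using that
  proof (induction t)
    case (Suc t)
    then have "{ps ! t, ps ! Suc t} \<in> E"
      using assms unfolding is_walk_def by blast
    with Suc show ?case
      by (simp add: rtranclp.rtrancl_into_rtrancl)
  qed simp
  moreover have "ps \<noteq> []" "ps ! 0 = u" "ps ! (length ps - 1) = v"
    using assms unfolding is_walk_def by (auto simp: hd_conv_nth last_conv_nth)
  ultimately show ?thesis
    by force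
qed

lemma walk_set_subset:
  assumes "geo_graph S E" "is_walk E u v ps" "u \<in> S"
  shows "set ps \<subseteq> S"
proof
  fix x assume "x \<in> set ps"
  then obtain t where t: "t < length ps" "x = ps ! t"
    by (auto simp: in_set_conv_nth)
  show "x \<in> S"
  proof (cases t)
    case 0
    then show ?thesis
      using assms(2,3) t unfolding is_walk_def by (auto simp: hd_conv_nth)
  next
    case (Suc t')
    then have "{ps ! t', x} \<in> E"
      using assms(2) t unfolding is_walk_def by auto
    then show ?thesis
      using assms(1) unfolding geo_graph_def by auto
  qed
qed

lemma dist_hd_le_walk_length:
  assumes "x \<in> set ps"
  shows "dist (hd ps) x \<le> walk_length ps"
proof -
  obtain t where t: "t < length ps" "x = ps ! t"
    using assms by (auto simp: in_set_conv_nth)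
  have triangle: "dist (ps ! 0) (ps ! s) \<le> (\<Sum>i<s. dist (ps ! i) (ps ! Suc i))" for s
  proof (induction s)
    case (Suc s)
    have "dist (ps ! 0) (ps ! Suc s) \<le> dist (ps ! 0) (ps ! s) + dist (ps ! s) (ps ! Suc s)"
      by (rule dist_triangle)
    with Suc show ?case
      by simp
  qed simp
  have "(\<Sum>i<t. dist (ps ! i) (ps ! Suc i)) \<le> walk_length ps"
    unfolding walk_length_def using t(1) by (intro sum_mono2) auto
  moreover have "hd ps = ps ! 0"
    using t(1) by (intro hd_conv_nth) auto
  ultimately show ?thesis
    using t(2) triangle[of t] by simp
qed

lemma graph_dist_ge:
  assumes "\<And>ps. is_walk E u v ps \<Longrightarrow> c \<le> walk_length ps"
  shows "ereal c \<le> graph_dist E u v"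
  unfolding graph_dist_def using assms by (auto intro!: INF_greatest)

lemma dilation_ge:
  assumes "u \<in> S" "v \<in> S" "u \<noteq> v" "ereal c \<le> graph_dist E u v"
  shows "ereal (c / dist u v) \<le> dilation S E"
proof -
  have "0 < dist u v"
    using assms(3) by simp
  then have "ereal (c / dist u v) = ereal c / ereal (dist u v)"
    by simp
  also have "\<dots> \<le> graph_dist E u v / ereal (dist u v)"
    using assms(4) \<open>0 < dist u v\<close> by (intro ereal_divide_right_mono) auto
  also have "\<dots> \<le> dilation S E"
    unfolding dilation_def using assms(1-3) by (intro SUP_upper2[of "(u, v)"]) auto
  finally show ?thesis .
qed

lemma dilation_infinite:
  assumes "u \<in> S" "v \<in> S" "u \<noteq> v" "\<not> (\<lambda>x y. {x, y} \<in> E)\<^sup>*\<^sup>* u v"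
  shows "dilation S E = \<infinity>"
proof -
  have no_walk: "{ps. is_walk E u v ps} = {}"
    using walk_imp_rtranclp[of E u v] assms(4) by blast
  have "graph_dist E u v = \<infinity>"
    unfolding graph_dist_def no_walk by (simp add: top_ereal_def)
  moreover have "0 < dist u v"
    using assms(3) by simp
  ultimately have "\<infinity> = graph_dist E u v / ereal (dist u v)"
    by simp
  also have "\<dots> \<le> dilation S E"
    unfolding dilation_def using assms(1-3) by (intro SUP_upper2[of "(u, v)"]) auto
  finally show ?thesis
    by (simp add: top_unique flip: top_ereal_def)
qed

lemma delta_ge:
  fixes S :: "'a::metric_space set"
  assumes "finite S" "card S = n"
    and "\<And>E. geo_graph S E \<Longrightarrow> card E = card S - 1 + k \<Longrightarrow> c \<le> dilation S E"
  shows "c \<le> delta TYPE('a) n k"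
proof -
  have "c \<le> min_dilation S k"
    unfolding min_dilation_def using assms(3) by (auto intro!: INF_greatest)
  also have "\<dots> \<le> delta TYPE('a) n k"
    unfolding delta_def using assms(1,2) by (intro SUP_upper) auto
  finally show ?thesis .
qed

text \<open>The edge sets with this property are exactly the forests.\<close>
definition admits_potentials :: "'a set set \<Rightarrow> bool" where
  "admits_potentials T \<longleftrightarrow>
     (\<forall>\<delta> :: 'a \<Rightarrow> 'a \<Rightarrow> int. (\<forall>x y. \<delta> y x = - \<delta> x y) \<longrightarrow>
        (\<exists>h. \<forall>x y. {x, y} \<in> T \<longrightarrow> h y - h x = \<delta> x y))"

lemma parent_edges_admit_potentials:
  assumes depth: "\<forall>v\<in>V. d v = Suc (d (par v))"
  shows "admits_potentials ((\<lambda>v. {v, par v}) ` V)"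
  unfolding admits_potentials_def
proof (intro allI impI)
  fix \<delta> :: "'a \<Rightarrow> 'a \<Rightarrow> int"
  assume antisym: "\<forall>x y. \<delta> y x = - \<delta> x y"
  define h where "h v = (\<Sum>t<d v. \<delta> ((par ^^ Suc t) v) ((par ^^ t) v))" for v
  have parent_step: "h v - h (par v) = \<delta> (par v) v" if "v \<in> V" for v
  proof -
    have "h v = \<delta> (par v) v + (\<Sum>t<d (par v). \<delta> ((par ^^ Suc (Suc t)) v) ((par ^^ Suc t) v))"
      unfolding h_def depth[rule_format, OF that] by (simp only: sum.lessThan_Suc_shift) simp
    also have "(\<Sum>t<d (par v). \<delta> ((par ^^ Suc (Suc t)) v) ((par ^^ Suc t) v)) = h (par v)"
      unfolding h_def by (simp only: funpow_Suc_right o_def)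
    finally show ?thesis
      by simp
  qed
  show "\<exists>h. \<forall>x y. {x, y} \<in> (\<lambda>v. {v, par v}) ` V \<longrightarrow> h y - h x = \<delta> x y"
  proof (intro exI allI impI)
    fix x y
    assume "{x, y} \<in> (\<lambda>v. {v, par v}) ` V"
    then obtain v where v: "v \<in> V" "{x, y} = {v, par v}"
      by blast
    then consider "x = v" "y = par v" | "x = par v" "y = v"
      by (auto simp: doubleton_eq_iff)
    then show "h y - h x = \<delta> x y"
      using parent_step[OF v(1)] antisym[rule_format, of "par v" v] by cases auto
  qed
qed

lemma inj_on_parent_edges:
  assumes depth: "\<forall>v\<in>V. d v = Suc (d (par v))"
  shows "inj_on (\<lambda>v. {v, par v}) V"
proof (rule inj_onI)
  fix v w
  assume v: "v \<in> V" and w: "w \<in> V" and edge: "{v, par v} = {w, par w}"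
  show "v = w"
  proof (rule ccontr)
    assume "v \<noteq> w"
    then have "v = par w" "w = par v"
      using edge by (auto simp: doubleton_eq_iff)
    then have "d v = Suc (d w)" "d w = Suc (d v)"
      using depth[rule_format, OF v] depth[rule_format, OF w] by metis+
    then show False
      by simp
  qed
qed

text \<open>Breadth-first search towards \<open>r\<close>: \<open>d\<close> is the distance to \<open>r\<close> and \<open>par\<close> the next
  vertex on a shortest path.\<close>
lemma rtranclp_imp_parent_depth:
  assumes "\<forall>v\<in>V. R\<^sup>*\<^sup>* v r"
  shows "\<exists>par d. \<forall>v\<in>V - {r}. R v (par v) \<and> d v = Suc (d (par v))"
proof -
  define d where "d v = (LEAST t. (R ^^ t) v r)" for v
  have d_le: "d v \<le> t" if "(R ^^ t) v r" for v t
    unfolding d_def using that by (rule Least_le)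
  have d_path: "(R ^^ d v) v r" if "(R ^^ t) v r" for v t
    unfolding d_def using that by (rule LeastI)
  have "\<exists>p. R v p \<and> d v = Suc (d p)" if "v \<in> V - {r}" for v
  proof -
    have "R\<^sup>*\<^sup>* v r"
      using assms that by blast
    then obtain t where "(R ^^ t) v r"
      using rtranclp_imp_relpowp by metis
    then have path: "(R ^^ d v) v r"
      by (rule d_path)
    moreover have nonzero: "d v \<noteq> 0"
      using path that by (metis DiffD2 relpowp_0_E singletonI)
    ultimately obtain p where p: "R v p" "(R ^^ (d v - 1)) p r"
      by (metis Suc_diff_1 not_gr_zero relpowp_Suc_D2)
    have "d p \<le> d v - 1"
      using p(2) by (rule d_le)
    moreover have "(R ^^ Suc (d p)) v r"
      using p d_path by (meson relpowp_Suc_I2)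
    then have "d v \<le> Suc (d p)"
      by (rule d_le)
    ultimately show ?thesis
      using p(1) nonzero by (intro exI[of _ p]) auto
  qed
  then show ?thesis
    by (metis (mono_tags) bchoice)
qed

lemma spanning_forest_exists:
  assumes "finite S" "r \<in> S" "\<forall>v\<in>S. (\<lambda>x y. {x, y} \<in> E)\<^sup>*\<^sup>* v r"
  shows "\<exists>T\<subseteq>E. card T = card S - 1 \<and> admits_potentials T"
proof -
  obtain par d where tree: "\<forall>v\<in>S - {r}. {v, par v} \<in> E \<and> d v = Suc (d (par v))"
    using rtranclp_imp_parent_depth[OF assms(3)] by blast
  have "card ((\<lambda>v. {v, par v}) ` (S - {r})) = card S - 1"
    using card_image[OF inj_on_parent_edges[of "S - {r}" d par]] tree assms(1,2)
    by (simp add: card_Diff_singleton)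
  moreover have "admits_potentials ((\<lambda>v. {v, par v}) ` (S - {r}))"
    using tree parent_edges_admit_potentials[of "S - {r}" d par] by blast
  ultimately show ?thesis
    using tree by (intro exI[of _ "(\<lambda>v. {v, par v}) ` (S - {r})"]) blast
qed

lemma class_with_all_edges_in_subset:
  assumes "finite E" "T \<subseteq> E" "card E \<le> card T + k" "{} \<notin> E"
    and "disjoint_family_on G {..k}"
  shows "\<exists>j\<le>k. \<forall>e\<in>E. e \<subseteq> G j \<longrightarrow> e \<in> T"
proof (rule ccontr)
  assume "\<not> ?thesis"
  then have "\<forall>j\<in>{..k}. \<exists>e. e \<in> E - T \<and> e \<subseteq> G j"
    by auto
  then obtain e where e: "\<forall>j\<in>{..k}. e j \<in> E - T \<and> e j \<subseteq> G j"
    by (metis bchoice)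
  have "inj_on e {..k}"
  proof (rule inj_onI)
    fix i j
    assume i: "i \<in> {..k}" and j: "j \<in> {..k}" and eq: "e i = e j"
    have "e i \<in> E" "e i \<subseteq> G i" "e j \<subseteq> G j"
      using e i j by blast+
    then have "e i \<noteq> {}" "e i \<subseteq> G i \<inter> G j"
      using eq assms(4) by auto
    then show "i = j"
      using assms(5) i j unfolding disjoint_family_on_def by blast
  qed
  then have "card {..k} \<le> card (E - T)"
    by (rule card_inj_on_le) (use e assms(1) in auto)
  also have "\<dots> = card E - card T"
    by (rule card_Diff_subset[OF finite_subset[OF assms(2,1)] assms(2)])
  finally show False
    using assms(3) by simp
qed

locale polygons =
  fixes P :: "nat \<Rightarrow> nat \<Rightarrow> 'a::metric_space" and M :: "nat \<Rightarrow> nat" and k :: nat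
  assumes polygon_size: "\<And>j. j \<le> k \<Longrightarrow> 2 \<le> M j"
    and dist_same_polygon:
      "\<And>j a b. j \<le> k \<Longrightarrow> dist (P j a) (P j b) = norm (polygon_vertex (M j) a - polygon_vertex (M j) b)"
    and dist_other_polygon: "\<And>j j' a b. j \<le> k \<Longrightarrow> j' \<le> k \<Longrightarrow> j \<noteq> j' \<Longrightarrow> 4 \<le> dist (P j a) (P j' b)"
begin

definition polygon :: "nat \<Rightarrow> 'a set" where
  "polygon j = P j ` {..<M j}"

definition points :: "'a set" where
  "points = (\<Union>j\<le>k. polygon j)"

lemma inj_on_polygon:
  assumes "j \<le> k"
  shows "inj_on (P j) {..<M j}"
proof (rule inj_onI)
  fix a b
  assume a: "a \<in> {..<M j}" and b: "b \<in> {..<M j}" and eq: "P j a = P j b"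
  show "a = b"
  proof (rule ccontr)
    assume "a \<noteq> b"
    then have "cyclic_disp (M j) a b \<noteq> 0"
      using a b by (intro cyclic_disp_nonzero) auto
    then have "0 < 4 * \<bar>real_of_int (cyclic_disp (M j) a b)\<bar> / real (M j)"
      using polygon_size[OF assms] by (intro divide_pos_pos) auto
    moreover have "4 * \<bar>real_of_int (cyclic_disp (M j) a b)\<bar> / real (M j) \<le> dist (P j a) (P j b)"
      using polygon_size[OF assms] unfolding dist_same_polygon[OF assms]
      by (intro norm_polygon_vertex_diff_ge) simp
    ultimately show False
      using eq by simp
  qed
qed

lemma disjoint_polygons: "disjoint_family_on polygon {..k}"
proof -
  have "P j a \<noteq> P j' b" if "j \<le> k" "j' \<le> k" "j \<noteq> j'" for j j' a b
    using dist_other_polygon[OF that, of a b] by auto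
  then show ?thesis
    unfolding disjoint_family_on_def polygon_def by blast
qed

lemma finite_points: "finite points"
  unfolding points_def polygon_def by simp

lemma card_points: "card points = (\<Sum>j\<le>k. M j)"
proof -
  have "card points = (\<Sum>j\<le>k. card (polygon j))"
    unfolding points_def using disjoint_polygons
    by (intro card_UN_disjoint) (auto simp: polygon_def disjoint_family_on_def)
  also have "\<dots> = (\<Sum>j\<le>k. M j)"
    unfolding polygon_def using inj_on_polygon by (intro sum.cong) (auto simp: card_image)
  finally show ?thesis .
qed

lemma vertex_in_points: "j \<le> k \<Longrightarrow> a < M j \<Longrightarrow> P j a \<in> points"
  unfolding points_def polygon_def by blast

lemma walk_length_ge_if_leaves_polygon:
  assumes E: "geo_graph points E" and j: "j \<le> k" and i: "i < M j"
    and walk: "is_walk E (P j i) w ps" and x: "x \<in> set ps" "x \<notin> polygon j"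
  shows "4 \<le> walk_length ps"
proof -
  have "x \<in> points"
    using walk_set_subset[OF E walk vertex_in_points[OF j i]] x(1) by blast
  then obtain j' b where "j' \<le> k" "x = P j' b" "j' \<noteq> j"
    using x(2) unfolding points_def polygon_def by blast
  then have "4 \<le> dist (P j i) x"
    using dist_other_polygon j by blast
  also have "\<dots> \<le> walk_length ps"
    using dist_hd_le_walk_length[OF x(1)] walk unfolding is_walk_def by simp
  finally show ?thesis .
qed

lemma walk_length_ge_of_potential:
  assumes E: "geo_graph points E" and j: "j \<le> k" and i: "i < M j"
    and potential: "\<And>a b. a < M j \<Longrightarrow> b < M j \<Longrightarrow> {P j a, P j b} \<in> E \<Longrightarrow> g b - g a = cyclic_disp (M j) a b"
    and increment: "g (Suc i mod M j) - g i \<noteq> 1"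
    and walk: "is_walk E (P j i) (P j (Suc i mod M j)) ps"
  shows "4 * (real (M j) - 1) / real (M j) \<le> walk_length ps"
proof (cases "set ps \<subseteq> polygon j")
  case False
  then obtain x where "x \<in> set ps" "x \<notin> polygon j"
    by blast
  then have "4 \<le> walk_length ps"
    by (rule walk_length_ge_if_leaves_polygon[OF E j i walk])
  moreover have "4 * (real (M j) - 1) / real (M j) \<le> 4"
    using polygon_size[OF j] by (simp add: field_simps)
  ultimately show ?thesis
    by linarith
next
  case True
  then have "ps \<in> lists (P j ` {..<M j})"
    unfolding polygon_def by auto
  then obtain xs where ps: "ps = map (P j) xs" and xs: "set xs \<subseteq> {..<M j}"
    unfolding lists_image by auto
  have "xs \<noteq> []" "P j (hd xs) = P j i" "P j (last xs) = P j (Suc i mod M j)"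
    using walk unfolding is_walk_def ps by (auto simp: hd_map last_map)
  moreover have "hd xs < M j" "last xs < M j"
    using xs hd_in_set[OF \<open>xs \<noteq> []\<close>] last_in_set[OF \<open>xs \<noteq> []\<close>] by auto
  moreover have "Suc i mod M j < M j"
    using polygon_size[OF j] by simp
  ultimately have ends: "xs \<noteq> []" "hd xs = i" "last xs = Suc i mod M j"
    using inj_on_polygon[OF j] i unfolding inj_on_def by blast+
  have "(\<Sum>t<length xs - 1. cyclic_disp (M j) (xs ! t) (xs ! Suc t)) = g (last xs) - g (hd xs)"
  proof (rule sum_steps_telescope[OF ends(1)], rule potential[symmetric])
    fix t
    assume "Suc t < length xs"
    then show "xs ! t < M j" "xs ! Suc t < M j"
      using xs by (meson Suc_lessD nth_mem lessThan_iff subsetD)+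
    show "{P j (xs ! t), P j (xs ! Suc t)} \<in> E"
      using walk \<open>Suc t < length xs\<close> unfolding is_walk_def ps by auto
  qed
  then have "(\<Sum>t<length xs - 1. cyclic_disp (M j) (xs ! t) (xs ! Suc t)) \<noteq> 1"
    using increment ends by simp
  then have "4 * (real (M j) - 1) / real (M j)
      \<le> (\<Sum>t<length xs - 1. norm (polygon_vertex (M j) (xs ! t) - polygon_vertex (M j) (xs ! Suc t)))"
    using polygon_size[OF j] ends by (intro polygon_path_length_ge) auto
  also have "\<dots> = walk_length ps"
    unfolding walk_length_def ps dist_same_polygon[OF j, symmetric] by (intro sum.cong) auto
  finally show ?thesis .
qed

lemma polygon_potential_exists:
  assumes E: "geo_graph points E" "card E \<le> card points - 1 + k"
    and r: "r \<in> points" and connected: "\<forall>v\<in>points. (\<lambda>x y. {x, y} \<in> E)\<^sup>*\<^sup>* v r"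
  shows "\<exists>j\<le>k. \<exists>g. \<forall>a b. a < M j \<longrightarrow> b < M j \<longrightarrow> {P j a, P j b} \<in> E \<longrightarrow>
           g b - g a = cyclic_disp (M j) a b"
proof -
  obtain T where T: "T \<subseteq> E" "card T = card points - 1" "admits_potentials T"
    using spanning_forest_exists[OF finite_points r connected] by metis
  have "E \<subseteq> Pow points" "{} \<notin> E"
    using E(1) unfolding geo_graph_def by fastforce+
  then have "finite E"
    using finite_points by (meson finite_Pow_iff finite_subset)
  then obtain j where j: "j \<le> k" and edges_in_T: "\<forall>e\<in>E. e \<subseteq> polygon j \<longrightarrow> e \<in> T"
    using class_with_all_edges_in_subset[OF _ T(1) _ \<open>{} \<notin> E\<close> disjoint_polygons] T(2) E(2) by auto
  define idx where "idx = the_inv_into {..<M j} (P j)"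
  have idx: "idx (P j a) = a" if "a < M j" for a
    unfolding idx_def using inj_on_polygon[OF j] that by (simp add: the_inv_into_f_f)
  have "\<exists>h. \<forall>x y. {x, y} \<in> T \<longrightarrow> h y - h x = cyclic_disp (M j) (idx x) (idx y)"
    by (rule T(3)[unfolded admits_potentials_def, rule_format]) (use cyclic_disp_antisym in blast)
  then obtain h where h: "\<forall>x y. {x, y} \<in> T \<longrightarrow> h y - h x = cyclic_disp (M j) (idx x) (idx y)"
    by blast
  have "h (P j b) - h (P j a) = cyclic_disp (M j) a b"
    if "a < M j" "b < M j" "{P j a, P j b} \<in> E" for a b
  proof -
    have "{P j a, P j b} \<subseteq> polygon j"
      using that(1,2) unfolding polygon_def by blast
    then have "{P j a, P j b} \<in> T"
      using edges_in_T that(3) by blast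
    then show ?thesis
      using h idx that(1,2) by simp
  qed
  then show ?thesis
    using j by (intro exI[of _ j] conjI exI[of _ "\<lambda>a. h (P j a)"]) auto
qed

lemma dilation_ge_of_potential:
  assumes E: "geo_graph points E" and j: "j \<le> k" and i: "i < M j"
    and potential: "\<And>a b. a < M j \<Longrightarrow> b < M j \<Longrightarrow> {P j a, P j b} \<in> E \<Longrightarrow> g b - g a = cyclic_disp (M j) a b"
    and increment: "g (Suc i mod M j) - g i \<noteq> 1"
  shows "ereal (2 * (real (M j) - 1) / pi) \<le> dilation points E"
proof -
  have M: "2 \<le> M j"
    using polygon_size[OF j] .
  define c where "c = 4 * (real (M j) - 1) / real (M j)"
  have "ereal c \<le> graph_dist E (P j i) (P j (Suc i mod M j))"
    unfolding c_def using walk_length_ge_of_potential[OF E j i potential increment]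
    by (intro graph_dist_ge) auto
  moreover have "i \<noteq> Suc i mod M j"
    using i M by (cases "Suc i = M j") auto
  then have "P j i \<noteq> P j (Suc i mod M j)"
    using inj_on_polygon[OF j] i M unfolding inj_on_def by (metis lessThan_iff mod_less_divisor not_numeral_le_zero gr0I)
  ultimately have "ereal (c / dist (P j i) (P j (Suc i mod M j))) \<le> dilation points E"
    using i M by (intro dilation_ge vertex_in_points[OF j]) auto
  moreover have "2 * (real (M j) - 1) / pi \<le> c / dist (P j i) (P j (Suc i mod M j))"
  proof -
    have "0 < dist (P j i) (P j (Suc i mod M j))"
      using \<open>P j i \<noteq> P j (Suc i mod M j)\<close> by simp
    moreover have "dist (P j i) (P j (Suc i mod M j)) \<le> 2 * pi / real (M j)"
      unfolding dist_same_polygon[OF j] using M by (intro norm_polygon_vertex_Suc_le) simp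
    moreover have "0 \<le> c"
      unfolding c_def using M by simp
    ultimately have "c / (2 * pi / real (M j)) \<le> c / dist (P j i) (P j (Suc i mod M j))"
      using M by (intro divide_left_mono mult_pos_pos) auto
    moreover have "c / (2 * pi / real (M j)) = 2 * (real (M j) - 1) / pi"
      unfolding c_def using M by (simp add: field_simps)
    ultimately show ?thesis
      by simp
  qed
  ultimately show ?thesis
    by (meson ereal_less_eq(3) order_trans)
qed

lemma dilation_ge_polygon:
  assumes E: "geo_graph points E" "card E \<le> card points - 1 + k"
  shows "\<exists>j\<le>k. ereal (2 * (real (M j) - 1) / pi) \<le> dilation points E"
proof -
  have root: "P 0 0 \<in> points"
    using polygon_size[of 0] by (intro vertex_in_points) auto
  show ?thesis
  proof (cases "\<forall>v\<in>points. (\<lambda>x y. {x, y} \<in> E)\<^sup>*\<^sup>* v (P 0 0)")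
    case False
    then obtain v where "v \<in> points" "\<not> (\<lambda>x y. {x, y} \<in> E)\<^sup>*\<^sup>* v (P 0 0)"
      by blast
    with root have "dilation points E = \<infinity>"
      by (intro dilation_infinite) auto
    then show ?thesis
      by auto
  next
    case True
    then obtain j g where j: "j \<le> k" and potential:
        "\<forall>a b. a < M j \<longrightarrow> b < M j \<longrightarrow> {P j a, P j b} \<in> E \<longrightarrow> g b - g a = cyclic_disp (M j) a b"
      using polygon_potential_exists[OF E root] by blast
    moreover obtain i where "i < M j" "g (Suc i mod M j) - g i \<noteq> 1"
      using cyclic_increment_ne_one[of "M j" g] polygon_size[OF j] by auto
    ultimately show ?thesis
      using dilation_ge_of_potential[OF E(1) j _ potential[rule_format]] by blast
  qed
qed

end

definition plane_embedding :: "'a::real_vector \<Rightarrow> 'a \<Rightarrow> complex \<Rightarrow> 'a" where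
  "plane_embedding u v z = Re z *\<^sub>R u + Im z *\<^sub>R v"

lemma dist_plane_embedding:
  fixes u v :: "'a::real_inner"
  assumes "norm u = 1" "norm v = 1" "inner u v = 0"
  shows "dist (plane_embedding u v z) (plane_embedding u v w) = norm (z - w)"
proof -
  have "plane_embedding u v z - plane_embedding u v w = plane_embedding u v (z - w)"
    by (simp add: plane_embedding_def algebra_simps)
  moreover have "(norm (plane_embedding u v x))\<^sup>2 = (Re x)\<^sup>2 + (Im x)\<^sup>2" for x
    using assms unfolding plane_embedding_def power2_norm_eq_inner norm_eq_1
    by (simp add: inner_add_left inner_add_right inner_commute power2_eq_square)
  then have "(norm (plane_embedding u v x))\<^sup>2 = (norm x)\<^sup>2" for x
    by (simp add: cmod_power2)
  ultimately show ?thesis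
    by (simp add: dist_norm power2_eq_iff_nonneg)
qed

lemma polygons_in_plane:
  fixes u v :: "'a::real_inner"
  assumes "norm u = 1" "norm v = 1" "inner u v = 0" and "\<And>j. j \<le> k \<Longrightarrow> 2 \<le> M j"
  shows "polygons (\<lambda>j a. plane_embedding u v (of_nat (6 * j) + polygon_vertex (M j) a)) M k"
proof
  fix j j' a b :: nat
  show "dist (plane_embedding u v (of_nat (6 * j) + polygon_vertex (M j) a))
      (plane_embedding u v (of_nat (6 * j) + polygon_vertex (M j) b))
    = norm (polygon_vertex (M j) a - polygon_vertex (M j) b)"
    unfolding dist_plane_embedding[OF assms(1-3)] by simp
  assume "j \<noteq> j'"
  define x :: complex where "x = of_real (real (6 * j) - real (6 * j'))"
  define w where "w = polygon_vertex (M j) a - polygon_vertex (M j') b"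
  have "norm x = \<bar>real (6 * j) - real (6 * j')\<bar>"
    unfolding x_def by (rule norm_of_real)
  then have "6 \<le> norm x"
    using \<open>j \<noteq> j'\<close> by (cases "j < j'") auto
  moreover have "norm w \<le> 2"
    using norm_triangle_ineq4[of "polygon_vertex (M j) a" "polygon_vertex (M j') b"]
    by (simp add: w_def polygon_vertex_def)
  moreover have "norm x - norm w \<le> norm (x + w)"
    by (rule norm_diff_ineq)
  moreover have "dist (plane_embedding u v (of_nat (6 * j) + polygon_vertex (M j) a))
      (plane_embedding u v (of_nat (6 * j') + polygon_vertex (M j') b)) = norm (x + w)"
    unfolding dist_plane_embedding[OF assms(1-3)] x_def w_def by (simp add: algebra_simps)
  ultimately show "4 \<le> dist (plane_embedding u v (of_nat (6 * j) + polygon_vertex (M j) a))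
      (plane_embedding u v (of_nat (6 * j') + polygon_vertex (M j') b))"
    by linarith
qed (use assms(4) in auto)

lemma orthonormal_pair_exists:
  assumes "2 \<le> DIM('a::euclidean_space)"
  shows "\<exists>u v :: 'a. norm u = 1 \<and> norm v = 1 \<and> inner u v = 0"
proof -
  obtain u :: 'a where u: "u \<in> Basis"
    using nonempty_Basis by blast
  then have "card (Basis - {u}) = DIM('a) - 1"
    by (simp add: card_Diff_singleton)
  then have "card (Basis - {u}) \<noteq> 0"
    using assms by simp
  then have "Basis - {u} \<noteq> {}"
    by (metis card.empty)
  then obtain v :: 'a where "v \<in> Basis" "v \<noteq> u"
    by blast
  then show ?thesis
    using u by (intro exI[of _ u] exI[of _ v]) (simp add: inner_not_same_Basis)
qed

lemma delta_ge_polygon_bound: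
  assumes "2 \<le> DIM('a::euclidean_space)" "2 \<le> m" "(k + 1) * m \<le> n"
  shows "ereal (2 * (real m - 1) / pi) \<le> delta TYPE('a) n k"
proof -
  obtain u v :: 'a where uv: "norm u = 1" "norm v = 1" "inner u v = 0"
    using orthonormal_pair_exists[OF assms(1)] by blast
  define M where "M j = (if j < k then m else n - k * m)" for j
  have M_ge: "m \<le> M j" for j
    using assms(3) by (simp add: M_def le_diff_conv2)
  have "(\<Sum>j\<le>k. M j) = k * m + (n - k * m)"
    by (simp add: M_def flip: lessThan_Suc_atMost)
  then have sum_M: "(\<Sum>j\<le>k. M j) = n"
    using assms(3) by simp
  interpret polygons "\<lambda>j a. plane_embedding u v (of_nat (6 * j) + polygon_vertex (M j) a)" M k
    using polygons_in_plane[OF uv] M_ge assms(2) order_trans by blast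
  show ?thesis
  proof (rule delta_ge[OF finite_points])
    show "card points = n"
      using card_points sum_M by simp
  next
    fix E
    assume "geo_graph points E" "card E = card points - 1 + k"
    then obtain j where "ereal (2 * (real (M j) - 1) / pi) \<le> dilation points E"
      using dilation_ge_polygon by fastforce
    moreover have "2 * (real m - 1) / pi \<le> 2 * (real (M j) - 1) / pi"
      using M_ge[of j] by (intro divide_right_mono) auto
    ultimately show "ereal (2 * (real m - 1) / pi) \<le> dilation points E"
      by (meson ereal_less_eq(3) order_trans)
  qed
qed

lemma delta_nonneg:
  assumes "2 \<le> n"
  shows "0 \<le> delta TYPE('a::euclidean_space) n k"
proof -
  obtain u :: 'a where "u \<in> Basis"
    using nonempty_Basis by blast
  then have "u \<noteq> 0"
    by auto
  define S where "S = (\<lambda>i. real i *\<^sub>R u) ` {..<n}"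
  have "inj_on (\<lambda>i. real i *\<^sub>R u) {..<n}"
    using \<open>u \<noteq> 0\<close> by (auto simp: inj_on_def)
  then have "card S = n"
    unfolding S_def by (simp add: card_image)
  moreover have "0 \<in> S" "u \<in> S"
    unfolding S_def using assms by (force, force intro: image_eqI[of _ _ 1])
  moreover have "ereal 0 \<le> graph_dist E 0 u" for E
    by (intro graph_dist_ge) (simp add: walk_length_def sum_nonneg)
  ultimately have "ereal (0 / dist 0 u) \<le> dilation S E" for E
    using \<open>u \<noteq> 0\<close> by (intro dilation_ge) auto
  then show ?thesis
    using \<open>card S = n\<close> by (intro delta_ge[of S]) (auto simp: S_def zero_ereal_def)
qed

theorem theorem2:
  fixes n k :: nat
  assumes "DIM('a::euclidean_space) \<ge> 2"
    and "0 < k" and "k < n"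
  shows "ereal (2 / pi * real_of_int \<lfloor>real n / real (k + 1)\<rfloor> - 1) \<le> delta TYPE('a) n k"
proof -
  define m where "m = n div (k + 1)"
  have floor: "\<lfloor>real n / real (k + 1)\<rfloor> = int m"
    unfolding m_def by (metis floor_divide_of_nat_eq)
  show ?thesis
  proof (cases "2 \<le> m")
    case True
    have "(k + 1) * m \<le> n"
      unfolding m_def by (rule times_div_less_eq_dividend)
    then have "ereal (2 * (real m - 1) / pi) \<le> delta TYPE('a) n k"
      using assms(1) True by (intro delta_ge_polygon_bound)
    moreover have "2 / pi * real m - 1 \<le> 2 * (real m - 1) / pi"
      using pi_gt3 by (simp add: field_simps)
    ultimately show ?thesis
      unfolding floor of_int_of_nat_eq by (meson ereal_less_eq(3) order_trans)
  next
    case False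
    then have "2 / pi * real m - 1 \<le> 0"
      using pi_gt3 by (simp add: field_simps)
    moreover have "0 \<le> delta TYPE('a) n k"
      using assms(2,3) by (intro delta_nonneg) simp
    ultimately show ?thesis
      unfolding floor of_int_of_nat_eq zero_ereal_def by (meson ereal_less_eq(3) order_trans)
  qed
qed

end
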